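(* Run xOrder with the criterion $F=\widehat G_\infty$ (the $\lambda\to\infty$ limit of the objective). Then its output $o^*=o^*(n^a,n^b)$ satisfies $$\Delta\mathrm{xAUC}(o^* )\le\max\Big(\frac{1}{n_1^a},\frac{1}{n_1^b}\Big).$$
   Context: Setting: two disjoint finite groups $a$, $b$ of samples, each sample $u$ having label $Y_u\in\{0,1\}$; $n^a,n^b$ group sizes, $n_1^a,n_0^a$ numbers of label-1/label-0 samples in $a$ (similarly for $b$), all $\ge1$, $k_{a,b}=n_1^an_0^b$, $k_{b,a}=n_0^an_1^b$. Fixed within-group rankings $\mathrm{p}^a=(\mathrm{p}^{a(1)},\dots,\mathrm{p}^{a(n^a)})$, $\mathrm{p}^b=(\mathrm{p}^{b(1)},\dots,\mathrm{p}^{b(n^b)})$. A cross-group ordering is a ranked list of all samples of $a\cup b$ whose restrictions to $a,b$ are $\mathrm{p}^a,\mathrm{p}^b$; $\mathrm{xAUC}_o(a,b)$ is the fraction of pairs (label-1 sample of $a$, label-0 sample of $b$) in which the first is ranked above the second, $\mathrm{xAUC}_o(b,a)$ symmetrically, $\Delta\mathrm{xAUC}(o)=|\mathrm{xAUC}_o(a,b)-\mathrm{xAUC}_o(b,a)|$. Partial orderings: for $0\le i\le n^a$, $0\le j\le n^b$, an $(i,j)$-partial ordering is a ranked list of $\mathrm{p}^{a(1)},\dots,\mathrm{p}^{a(i)},\mathrm{p}^{b(1)},\dots,\mathrm{p}^{b(j)}$ preserving within-group orders. $H_{ab}(o)$ is the number of pairs $(k,h)$ with $1\le k\le i$, $1\le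 h\le n^b$, $Y_{\mathrm{p}^{a(k)}}=1$, $Y_{\mathrm{p}^{b(h)}}=0$, and either $h>j$ or ($h\le j$ and $\mathrm{p}^{a(k)}$ precedes $\mathrm{p}^{b(h)}$ in $o$); $H_{ba}(o)$ is the number of pairs $(h,k)$ with $1\le h\le j$, $1\le k\le n^a$, $Y_{\mathrm{p}^{b(h)}}=1$, $Y_{\mathrm{p}^{a(k)}}=0$, and either $k>i$ or ($k\le i$ and $\mathrm{p}^{b(h)}$ precedes $\mathrm{p}^{a(k)}$ in $o$). $\widehat G_\infty(o)=-\big|H_{ab}(o)/k_{a,b}-H_{ba}(o)/k_{b,a}\big|$; for a full ordering ($i=n^a,j=n^b$) this equals $-\Delta\mathrm{xAUC}(o)$. xOrder with criterion $F$: $o^*(i,0)=(\mathrm{p}^{a(1)},\dots,\mathrm{p}^{a(i)})$, $o^*(0,j)=(\mathrm{p}^{b(1)},\dots,\mathrm{p}^{b(j)})$; for $i=1,\dots,n^a$ and $j=1,\dots,n^b$, with $c_a=o^*(i-1,j)\oplus\mathrm{p}^{a(i)}$ and $c_b=o^*(i,j-1)\oplus\mathrm{p}^{b(j)}$ ($\oplus$ = append at the bottom), set $o^*(i,j)=c_a$ if $F(c_a)>F(c_b)$ and $o^*(i,j)=c_b$ otherwise. Output $o^*(n^a,n^b)$. *)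

theory Defs
  imports Complex_Main
begin

text \<open>Samples have an abstract type 'u; labels are booleans (True = label 1, False = label 0).
  The within-group rankings are distinct lists pa, pb (top first); positions are 0-based,
  so pa ! k is the paper's p^{a(k+1)}.\<close>

definition precedes :: "'u list \<Rightarrow> 'u \<Rightarrow> 'u \<Rightarrow> bool" where
  "precedes os x y \<longleftrightarrow> (\<exists>us vs. os = us @ x # vs \<and> y \<in> set vs)"

definition n1 :: "('u \<Rightarrow> bool) \<Rightarrow> 'u list \<Rightarrow> nat" where
  "n1 Y p = length (filter Y p)"

definition n0 :: "('u \<Rightarrow> bool) \<Rightarrow> 'u list \<Rightarrow> nat" where
  "n0 Y p = length (filter (\<lambda>u. \<not> Y u) p)"

definition Hab :: "('u \<Rightarrow> bool) \<Rightarrow> 'u list \<Rightarrow> 'u list \<Rightarrow> nat \<Rightarrow> nat \<Rightarrow> 'u list \<Rightarrow> nat" where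
  "Hab Y pa pb i j os = card {(k, h). k < i \<and> h < length pb \<and> Y (pa ! k) \<and> \<not> Y (pb ! h) \<and>
       (j \<le> h \<or> (h < j \<and> precedes os (pa ! k) (pb ! h)))}"

definition Hba :: "('u \<Rightarrow> bool) \<Rightarrow> 'u list \<Rightarrow> 'u list \<Rightarrow> nat \<Rightarrow> nat \<Rightarrow> 'u list \<Rightarrow> nat" where
  "Hba Y pa pb i j os = card {(h, k). h < j \<and> k < length pa \<and> Y (pb ! h) \<and> \<not> Y (pa ! k) \<and>
       (i \<le> k \<or> (k < i \<and> precedes os (pb ! h) (pa ! k)))}"

definition Ghat_inf :: "('u \<Rightarrow> bool) \<Rightarrow> 'u list \<Rightarrow> 'u list \<Rightarrow> nat \<Rightarrow> nat \<Rightarrow> 'u list \<Rightarrow> real" where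
  "Ghat_inf Y pa pb i j os =
     - \<bar>real (Hab Y pa pb i j os) / real (n1 Y pa * n0 Y pb)
        - real (Hba Y pa pb i j os) / real (n0 Y pa * n1 Y pb)\<bar>"

fun xOrder :: "(nat \<Rightarrow> nat \<Rightarrow> 'u list \<Rightarrow> real) \<Rightarrow> 'u list \<Rightarrow> 'u list \<Rightarrow> nat \<Rightarrow> nat \<Rightarrow> 'u list" where
  "xOrder F pa pb 0 j = take j pb"
| "xOrder F pa pb (Suc i) 0 = take (Suc i) pa"
| "xOrder F pa pb (Suc i) (Suc j) =
     (let ca = xOrder F pa pb i (Suc j) @ [pa ! i];
          cb = xOrder F pa pb (Suc i) j @ [pb ! j]
      in if F (Suc i) (Suc j) ca > F (Suc i) (Suc j) cb then ca else cb)"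

definition xAUC :: "('u \<Rightarrow> bool) \<Rightarrow> 'u list \<Rightarrow> 'u list \<Rightarrow> 'u list \<Rightarrow> real" where
  "xAUC Y p q os = real (card {(u, v). u \<in> set p \<and> Y u \<and> v \<in> set q \<and> \<not> Y v \<and> precedes os u v})
                  / real (n1 Y p * n0 Y q)"

definition Delta_xAUC :: "('u \<Rightarrow> bool) \<Rightarrow> 'u list \<Rightarrow> 'u list \<Rightarrow> 'u list \<Rightarrow> real" where
  "Delta_xAUC Y pa pb os = \<bar>xAUC Y pa pb os - xAUC Y pb pa os\<bar>"

end

theory Submission
  imports Defs
begin

text \<open>Let S(i,j) = H_ab/k_ab - H_ba/k_ba for the (i,j)-partial ordering chosen by xOrder,
  so that the criterion is -|S| and, for the full ordering, \<Delta>xAUC = |S|. Appending the next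
  sample of a raises S by at most 1/n_1^a, appending the next sample of b lowers it by at most
  1/n_1^b, and each move is 0 once the other group is exhausted: xOrder is a greedy walk on the
  grid keeping |S| small. With M the larger step bound, induction over the grid shows that if
  S(i,j+1) < -M then the b-move from (i,j) already lands below -M, and symmetrically above M;
  the point is that the two competing candidates at a cell cannot straddle the band [-M, M],
  for then S at their common predecessor would be both negative and positive. On the last row
  the b-moves vanish, so S never drops below -M there; likewise S never exceeds M on the last
  column.\<close>

locale greedy_balance =
  fixes S al be :: "nat \<Rightarrow> nat \<Rightarrow> real" and M :: real and na nb :: nat
  assumes start: "S 0 0 = 0"
    and first_col: "i < na \<Longrightarrow> S (Suc i) 0 = S i 0 + al i 0"
    and first_row: "j < nb \<Longrightarrow> S 0 (Suc j) = S 0 j - be 0 j"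
    and greedy: "i < na \<Longrightarrow> j < nb \<Longrightarrow> S (Suc i) (Suc j) =
        (if \<bar>S i (Suc j) + al i (Suc j)\<bar> < \<bar>S (Suc i) j - be (Suc i) j\<bar>
         then S i (Suc j) + al i (Suc j) else S (Suc i) j - be (Suc i) j)"
    and M_nonneg: "0 \<le> M"
    and al_bounds: "i < na \<Longrightarrow> j \<le> nb \<Longrightarrow> 0 \<le> al i j \<and> al i j \<le> M"
    and be_bounds: "i \<le> na \<Longrightarrow> j < nb \<Longrightarrow> 0 \<le> be i j \<and> be i j \<le> M"
    and al_last: "i < na \<Longrightarrow> al i nb = 0"
    and be_last: "j < nb \<Longrightarrow> be na j = 0"
begin

lemma no_crossing:
  assumes "i < na" "j < nb"
    and "S i (Suc j) < -M \<Longrightarrow> S i j - be i j < -M"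
    and "S (Suc i) j > M \<Longrightarrow> S i j + al i j > M"
  shows "\<not> (S i (Suc j) + al i (Suc j) < -M \<and> S (Suc i) j - be (Suc i) j > M)"
proof
  assume "S i (Suc j) + al i (Suc j) < -M \<and> S (Suc i) j - be (Suc i) j > M"
  then have "S i j - be i j < -M" "S i j + al i j > M"
    using assms al_bounds[of i "Suc j"] be_bounds[of "Suc i" j] by auto
  then show False using assms al_bounds[of i j] be_bounds[of i j] by auto
qed

lemma overshoot_inherited:
  "(i \<le> na \<longrightarrow> j < nb \<longrightarrow> S i (Suc j) < -M \<longrightarrow> S i j - be i j < -M) \<and>
   (i < na \<longrightarrow> j \<le> nb \<longrightarrow> S (Suc i) j > M \<longrightarrow> S i j + al i j > M)"
proof (induction "i + j" arbitrary: i j rule: less_induct)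
  case less
  have crossing_free: "\<not> (S i' (Suc j') + al i' (Suc j') < -M \<and> S (Suc i') j' - be (Suc i') j' > M)"
    if "i' < na" "j' < nb" "i' + j' < i + j" for i' j'
    using no_crossing[OF that(1,2)] less.hyps[OF that(3)] that(1,2) by simp
  show ?case
  proof (intro conjI impI)
    assume "i \<le> na" "j < nb" and below: "S i (Suc j) < -M"
    show "S i j - be i j < -M"
    proof (cases i)
      case 0
      then show ?thesis using first_row \<open>j < nb\<close> below by simp
    next
      case (Suc i')
      then show ?thesis
        using greedy[of i' j] crossing_free[of i' j] \<open>i \<le> na\<close> \<open>j < nb\<close> below
        by (auto split: if_splits)
    qed
  next
    assume "i < na" "j \<le> nb" and above: "S (Suc i) j > M"
    show "S i j + al i j > M"
    proof (cases j)
      case 0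
      then show ?thesis using first_col \<open>i < na\<close> above by simp
    next
      case (Suc j')
      then show ?thesis
        using greedy[of i j'] crossing_free[of i j'] \<open>i < na\<close> \<open>j \<le> nb\<close> above
        by (auto split: if_splits)
    qed
  qed
qed

lemma first_col_nonneg: "i \<le> na \<Longrightarrow> 0 \<le> S i 0"
  by (induction i) (auto simp: start first_col al_bounds)

lemma first_row_nonpos: "j \<le> nb \<Longrightarrow> S 0 j \<le> 0"
proof (induction j)
  case (Suc j)
  then show ?case using first_row[of j] be_bounds[of 0 j] by simp
qed (simp add: start)

lemma last_row_lower: "j \<le> nb \<Longrightarrow> -M \<le> S na j"
proof (induction j)
  case 0
  then show ?case using first_col_nonneg[of na] M_nonneg by simp
next
  case (Suc j)
  then show ?case using overshoot_inherited[of na j] be_last[of j] by force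
qed

lemma last_col_upper: "i \<le> na \<Longrightarrow> S i nb \<le> M"
proof (induction i)
  case 0
  then show ?case using first_row_nonpos[of nb] M_nonneg by simp
next
  case (Suc i)
  then show ?case using overshoot_inherited[of i nb] al_last[of i] by force
qed

theorem final_abs_le: "\<bar>S na nb\<bar> \<le> M"
  using last_row_lower[of nb] last_col_upper[of na] by simp

end

lemma precedes_snoc:
  "precedes (os @ [z]) x y \<longleftrightarrow> precedes os x y \<or> (x \<in> set os \<and> y = z)"
proof
  assume "precedes (os @ [z]) x y"
  then obtain us vs where "os @ [z] = us @ x # vs" and y: "y \<in> set vs"
    unfolding precedes_def by blast
  then obtain ws where "vs = ws @ [z]" "os = us @ x # ws"
    by (cases vs rule: rev_exhaust) auto
  then show "precedes os x y \<or> (x \<in> set os \<and> y = z)"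
    using y unfolding precedes_def by auto
next
  assume "precedes os x y \<or> (x \<in> set os \<and> y = z)"
  then obtain us vs where "os = us @ x # vs" "y \<in> set (vs @ [z])"
    unfolding precedes_def by (auto dest: split_list)
  then show "precedes (os @ [z]) x y"
    unfolding precedes_def by (intro exI[of _ us] exI[of _ "vs @ [z]"]) simp
qed

lemma precedes_imp_mem: "precedes os x y \<Longrightarrow> x \<in> set os"
  unfolding precedes_def by auto

lemma Hba_eq_Hab_swap: "Hba Y pa pb i j os = Hab Y pb pa j i os"
  unfolding Hba_def Hab_def ..

lemma card_nth_from_eq_length_filter_drop:
  "card {h. j \<le> h \<and> h < length xs \<and> P (xs ! h)} = length (filter P (drop j xs))"
proof -
  have "{h. j \<le> h \<and> h < length xs \<and> P (xs ! h)} =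
        (+) j ` {h. h < length (drop j xs) \<and> P (drop j xs ! h)}"
    by (auto simp: image_iff) (metis add_diff_inverse_nat diff_less_mono not_le)
  then show ?thesis
    by (simp add: card_image length_filter_conv_card)
qed

lemma Hab_snoc_first:
  assumes "pa ! i \<notin> set os" "pa ! i \<notin> set pb"
  shows "Hab Y pa pb (Suc i) j (os @ [pa ! i]) =
    Hab Y pa pb i j os + (if Y (pa ! i) then n0 Y (drop j pb) else 0)"
proof -
  define Old where "Old = {(k, h). k < i \<and> h < length pb \<and> Y (pa ! k) \<and> \<not> Y (pb ! h) \<and>
       (j \<le> h \<or> (h < j \<and> precedes os (pa ! k) (pb ! h)))}"
  define New where "New = {(k, h). k = i \<and> Y (pa ! i) \<and> j \<le> h \<and> h < length pb \<and> \<not> Y (pb ! h)}"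
  have "pb ! h \<noteq> pa ! i" if "h < length pb" for h
    using assms(2) nth_mem that by metis
  moreover have "\<not> precedes os (pa ! i) y" for y
    using assms(1) precedes_imp_mem by metis
  ultimately have split: "{(k, h). k < Suc i \<and> h < length pb \<and> Y (pa ! k) \<and> \<not> Y (pb ! h) \<and>
       (j \<le> h \<or> (h < j \<and> precedes (os @ [pa ! i]) (pa ! k) (pb ! h)))} = Old \<union> New"
    unfolding Old_def New_def by (auto simp: precedes_snoc less_Suc_eq)
  have "finite Old"
    by (rule finite_subset[of _ "{..<i} \<times> {..<length pb}"]) (auto simp: Old_def)
  moreover have "finite New"
    by (rule finite_subset[of _ "{i} \<times> {..<length pb}"]) (auto simp: New_def)
  moreover have "Old \<inter> New = {}"
    unfolding Old_def New_def by auto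
  moreover have "card New = (if Y (pa ! i) then n0 Y (drop j pb) else 0)"
  proof -
    have "New = (if Y (pa ! i) then Pair i ` {h. j \<le> h \<and> h < length pb \<and> \<not> Y (pb ! h)} else {})"
      unfolding New_def by auto
    then show ?thesis
      using card_nth_from_eq_length_filter_drop[of j pb "\<lambda>u. \<not> Y u"]
      by (simp add: card_image inj_on_def n0_def)
  qed
  ultimately show ?thesis
    unfolding Hab_def split by (simp add: card_Un_disjoint Old_def)
qed

lemma Hab_snoc_second:
  assumes "j < length pb" "distinct pb" "\<forall>k<i. pa ! k \<in> set os"
  shows "Hab Y pa pb i (Suc j) (os @ [pb ! j]) = Hab Y pa pb i j os"
proof -
  have "pb ! h = pb ! j \<longleftrightarrow> h = j" if "h < length pb" for h
    using assms(1,2) nth_eq_iff_index_eq that by metis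
  then show ?thesis
    unfolding Hab_def using assms(3)
    by (intro arg_cong[where f=card]) (auto simp: precedes_snoc less_Suc_eq)
qed

definition xgap :: "('u \<Rightarrow> bool) \<Rightarrow> 'u list \<Rightarrow> 'u list \<Rightarrow> nat \<Rightarrow> nat \<Rightarrow> 'u list \<Rightarrow> real" where
  "xgap Y pa pb i j os =
     real (Hab Y pa pb i j os) / real (n1 Y pa * n0 Y pb)
   - real (Hba Y pa pb i j os) / real (n0 Y pa * n1 Y pb)"

text \<open>Placing pa ! i after an (i,j)-partial ordering creates one new counted pair for each
  label-0 sample of pb not placed yet.\<close>

definition xgap_incr :: "('u \<Rightarrow> bool) \<Rightarrow> 'u list \<Rightarrow> 'u list \<Rightarrow> nat \<Rightarrow> nat \<Rightarrow> real" where
  "xgap_incr Y pa pb i j =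
     (if Y (pa ! i) then real (n0 Y (drop j pb)) else 0) / real (n1 Y pa * n0 Y pb)"

lemma Ghat_inf_eq_xgap: "Ghat_inf Y pa pb i j os = - \<bar>xgap Y pa pb i j os\<bar>"
  unfolding Ghat_inf_def xgap_def ..

lemma xgap_swap: "xgap Y pb pa j i os = - xgap Y pa pb i j os"
  unfolding xgap_def Hba_eq_Hab_swap by (simp add: mult.commute)

lemma xgap_incr_nonneg: "0 \<le> xgap_incr Y pa pb i j"
  by (simp add: xgap_incr_def)

lemma xgap_incr_le: "xgap_incr Y pa pb i j \<le> 1 / real (n1 Y pa)"
proof (cases "n0 Y pb = 0")
  case False
  have "n0 Y (drop j pb) \<le> n0 Y pb"
    unfolding n0_def by (metis append_take_drop_id filter_append le_add2 length_append)
  then have "xgap_incr Y pa pb i j \<le> real (n0 Y pb) / real (n1 Y pa * n0 Y pb)"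
    unfolding xgap_incr_def by (intro divide_right_mono) simp_all
  also have "\<dots> = 1 / real (n1 Y pa)"
    using False by simp
  finally show ?thesis .
qed (simp add: xgap_incr_def)

lemma xgap_incr_last: "xgap_incr Y pa pb i (length pb) = 0"
  by (simp add: xgap_incr_def n0_def)

lemma xgap_snoc_first:
  assumes "distinct pa" "distinct pb" "set pa \<inter> set pb = {}"
    and "i < length pa" "j \<le> length pb" and os: "set os = set (take i pa) \<union> set (take j pb)"
  shows "xgap Y pa pb (Suc i) j (os @ [pa ! i]) = xgap Y pa pb i j os + xgap_incr Y pa pb i j"
proof -
  have notin_pb: "pa ! i \<notin> set pb"
    using assms(3,4) nth_mem by fastforce
  moreover have "pa ! i \<notin> set (take i pa)"
    using assms(1,4) by (simp add: nth_eq_iff_index_eq in_set_conv_nth)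
  ultimately have notin_os: "pa ! i \<notin> set os"
    using os in_set_takeD by fastforce
  have "\<forall>h<j. pb ! h \<in> set os"
    using os \<open>j \<le> length pb\<close> by (auto simp: in_set_conv_nth)
  then show ?thesis
    unfolding xgap_def xgap_incr_def Hba_eq_Hab_swap
    using Hab_snoc_first[OF notin_os notin_pb] Hab_snoc_second[OF assms(4,1)]
    by (simp add: add_divide_distrib)
qed

lemma xgap_snoc_second:
  assumes "distinct pa" "distinct pb" "set pa \<inter> set pb = {}"
    and "i \<le> length pa" "j < length pb" and "set os = set (take i pa) \<union> set (take j pb)"
  shows "xgap Y pa pb i (Suc j) (os @ [pb ! j]) = xgap Y pa pb i j os - xgap_incr Y pb pa j i"
proof -
  have "set os = set (take j pb) \<union> set (take i pa)"
    using assms(6) by auto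
  then have "xgap Y pb pa (Suc j) i (os @ [pb ! j]) = xgap Y pb pa j i os + xgap_incr Y pb pa j i"
    using assms(1-5) by (intro xgap_snoc_first) auto
  then show ?thesis
    using xgap_swap[where pb=pa and pa=pb] by simp
qed

lemma xOrder_set:
  "i \<le> length pa \<Longrightarrow> j \<le> length pb \<Longrightarrow>
   set (xOrder F pa pb i j) = set (take i pa) \<union> set (take j pb)"
proof (induction F pa pb i j rule: xOrder.induct)
  case (3 F pa pb i j)
  then show ?case
    by (auto simp: Let_def take_Suc_conv_app_nth)
qed simp_all

lemma xOrder_first_col:
  "i < length pa \<Longrightarrow> xOrder F pa pb (Suc i) 0 = xOrder F pa pb i 0 @ [pa ! i]"
  by (cases i) (simp_all add: take_Suc_conv_app_nth)

lemma xOrder_first_row: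
  "j < length pb \<Longrightarrow> xOrder F pa pb 0 (Suc j) = xOrder F pa pb 0 j @ [pb ! j]"
  by (simp add: take_Suc_conv_app_nth)

lemma card_pairs_eq_card_indices:
  assumes "distinct p" "distinct q"
  shows "card {(u, v). u \<in> set p \<and> Y u \<and> v \<in> set q \<and> \<not> Y v \<and> R u v} =
         card {(k, h). k < length p \<and> h < length q \<and> Y (p ! k) \<and> \<not> Y (q ! h) \<and> R (p ! k) (q ! h)}"
proof -
  let ?I = "{(k, h). k < length p \<and> h < length q \<and> Y (p ! k) \<and> \<not> Y (q ! h) \<and> R (p ! k) (q ! h)}"
  have "{(u, v). u \<in> set p \<and> Y u \<and> v \<in> set q \<and> \<not> Y v \<and> R u v} = (\<lambda>(k, h). (p ! k, q ! h)) ` ?I"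
    by (auto simp: in_set_conv_nth image_iff)
  moreover have "inj_on (\<lambda>(k, h). (p ! k, q ! h)) ?I"
    using assms by (auto simp: inj_on_def nth_eq_iff_index_eq)
  ultimately show ?thesis
    by (simp add: card_image)
qed

lemma xAUC_eq_Hab:
  assumes "distinct pa" "distinct pb"
  shows "xAUC Y pa pb os = real (Hab Y pa pb (length pa) (length pb) os) / real (n1 Y pa * n0 Y pb)"
  unfolding xAUC_def Hab_def card_pairs_eq_card_indices[OF assms]
  by (auto intro!: arg_cong[where f=card])

lemma Delta_xAUC_eq_xgap:
  assumes "distinct pa" "distinct pb"
  shows "Delta_xAUC Y pa pb os = \<bar>xgap Y pa pb (length pa) (length pb) os\<bar>"
  unfolding Delta_xAUC_def xgap_def xAUC_eq_Hab[OF assms] xAUC_eq_Hab[OF assms(2,1)] Hba_eq_Hab_swap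
  by (simp add: mult.commute)

lemma xOrder_greedy_balance:
  assumes "distinct pa" "distinct pb" "set pa \<inter> set pb = {}"
  shows "greedy_balance (\<lambda>i j. xgap Y pa pb i j (xOrder (Ghat_inf Y pa pb) pa pb i j))
     (xgap_incr Y pa pb) (\<lambda>i j. xgap_incr Y pb pa j i)
     (max (1 / real (n1 Y pa)) (1 / real (n1 Y pb))) (length pa) (length pb)"
proof -
  let ?ord = "xOrder (Ghat_inf Y pa pb) pa pb"
  have ord_set: "set (?ord i j) = set (take i pa) \<union> set (take j pb)"
    if "i \<le> length pa" "j \<le> length pb" for i j
    using xOrder_set that .
  have snoc_first: "xgap Y pa pb (Suc i) j (?ord i j @ [pa ! i]) = xgap Y pa pb i j (?ord i j) + xgap_incr Y pa pb i j"
    if "i < length pa" "j \<le> length pb" for i j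
    using xgap_snoc_first[OF assms that ord_set] that by simp
  have snoc_second: "xgap Y pa pb i (Suc j) (?ord i j @ [pb ! j]) = xgap Y pa pb i j (?ord i j) - xgap_incr Y pb pa j i"
    if "i \<le> length pa" "j < length pb" for i j
    using xgap_snoc_second[OF assms that ord_set] that by simp
  show ?thesis
  proof
    show "xgap Y pa pb 0 0 (?ord 0 0) = 0"
      by (simp add: xgap_def Hab_def Hba_def)
  next
    fix i j
    assume "i < length pa" "j < length pb"
    then show "xgap Y pa pb (Suc i) (Suc j) (?ord (Suc i) (Suc j)) =
        (if \<bar>xgap Y pa pb i (Suc j) (?ord i (Suc j)) + xgap_incr Y pa pb i (Suc j)\<bar>
          < \<bar>xgap Y pa pb (Suc i) j (?ord (Suc i) j) - xgap_incr Y pb pa j (Suc i)\<bar>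
         then xgap Y pa pb i (Suc j) (?ord i (Suc j)) + xgap_incr Y pa pb i (Suc j)
         else xgap Y pa pb (Suc i) j (?ord (Suc i) j) - xgap_incr Y pb pa j (Suc i))"
      using snoc_first[of i "Suc j"] snoc_second[of "Suc i" j]
      by (simp add: Let_def Ghat_inf_eq_xgap)
  next
    fix i
    assume "i < length pa"
    then show "xgap Y pa pb (Suc i) 0 (?ord (Suc i) 0) = xgap Y pa pb i 0 (?ord i 0) + xgap_incr Y pa pb i 0"
      unfolding xOrder_first_col[OF \<open>i < length pa\<close>] by (intro snoc_first) simp_all
  next
    fix j
    assume "j < length pb"
    then show "xgap Y pa pb 0 (Suc j) (?ord 0 (Suc j)) = xgap Y pa pb 0 j (?ord 0 j) - xgap_incr Y pb pa j 0"
      unfolding xOrder_first_row[OF \<open>j < length pb\<close>] by (intro snoc_second) simp_all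
  qed (simp_all add: xgap_incr_nonneg xgap_incr_last le_max_iff_disj xgap_incr_le)
qed

theorem theorem1:
  fixes Y :: "'u \<Rightarrow> bool" and pa pb :: "'u list"
  assumes "distinct pa" and "distinct pb" and "set pa \<inter> set pb = {}"
    and "n1 Y pa \<ge> 1" and "n0 Y pa \<ge> 1" and "n1 Y pb \<ge> 1" and "n0 Y pb \<ge> 1"
  shows "Delta_xAUC Y pa pb (xOrder (Ghat_inf Y pa pb) pa pb (length pa) (length pb))
           \<le> max (1 / real (n1 Y pa)) (1 / real (n1 Y pb))"
  \<comment> \<open>The label counts need not be positive: with x / 0 = 0 the degenerate cases hold as well.\<close>
  using greedy_balance.final_abs_le[OF xOrder_greedy_balance[OF assms(1-3)]]
  by (simp add: Delta_xAUC_eq_xgap[OF assms(1,2)])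

end
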